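(* Let $0<\alpha\le 1/\sqrt2$ and let $X:[-1,1]^2\to\{0,1\}$ be $X(s,t) = \mathbf{1}\{|s\cos\nu+t\sin\nu|\le\alpha,\ |-s\sin\nu+t\cos\nu|\le\alpha\}$ with $\nu=\pi/4$, and let $\mathcal{T}_X:L^2([-1,1])\to L^2([-1,1])$, $\mathcal{T}_X[f](s) = \int_{-1}^1 X(s,t)f(t)\,dt$. Define $$\lambda_k = (-1)^{k-1}\frac{4\sqrt2\,\alpha}{\pi(2k-1)},\qquad g_k(s) = \begin{cases}\frac{1}{\sqrt{\alpha\sqrt2}}\cos\!\Big(\frac{\pi}{2\sqrt2\alpha}(2k-1)s\Big) & |s|\le\sqrt2\alpha\\ 0&\text{otherwise}\end{cases}$$ for $k=1,2,\dots$ and $s\in[-1,1]$. Then the functions $g_k$ form an orthonormal basis for the range of the (compact, self-adjoint) operator $\mathcal{T}_X$, and $$\mathcal{T}_X = \sum_{k\in\mathbb{N}}\lambda_k\, g_k g_k^*,$$ where $g_kg_k^*$ is the operator $h\mapsto g_k\langle g_k,h\rangle_{L^2}$.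
   Context: $X$ is the indicator of the square $[-\alpha,\alpha]^2$ rotated by $\pi/4$ (a diamond $\{|s+t|\le\sqrt2\alpha,\ |t-s|\le\sqrt2\alpha\}$). *)

theory Defs
  imports "HOL-Analysis.Analysis"
begin

abbreviation I11 :: "real measure" where "I11 \<equiv> lebesgue_on {-1..1}"

text \<open>Square-integrable (real-valued) functions on [-1,1]; elements of L2 are represented
  by functions, equality in L2 being equality almost everywhere.\<close>
definition L2 :: "(real \<Rightarrow> real) \<Rightarrow> bool" where
  "L2 f \<longleftrightarrow> f \<in> borel_measurable I11 \<and> integrable I11 (\<lambda>t. (f t)\<^sup>2)"

definition l2_inner :: "(real \<Rightarrow> real) \<Rightarrow> (real \<Rightarrow> real) \<Rightarrow> real" where
  "l2_inner f g = (\<integral>t. f t * g t \<partial>I11)"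

definition l2_norm :: "(real \<Rightarrow> real) \<Rightarrow> real" where
  "l2_norm f = sqrt (l2_inner f f)"

definition Xker :: "real \<Rightarrow> real \<Rightarrow> real \<Rightarrow> real" where
  "Xker \<alpha> s t = (let \<nu> = pi / 4 in
     if \<bar>s * cos \<nu> + t * sin \<nu>\<bar> \<le> \<alpha> \<and> \<bar>- s * sin \<nu> + t * cos \<nu>\<bar> \<le> \<alpha> then 1 else 0)"

definition TX :: "real \<Rightarrow> (real \<Rightarrow> real) \<Rightarrow> real \<Rightarrow> real" where
  "TX \<alpha> f s = (\<integral>t. Xker \<alpha> s t * f t \<partial>I11)"

definition lam :: "real \<Rightarrow> nat \<Rightarrow> real" where
  "lam \<alpha> k = (-1) ^ (k - 1) * (4 * sqrt 2 * \<alpha>) / (pi * (2 * real k - 1))"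

definition gk :: "real \<Rightarrow> nat \<Rightarrow> real \<Rightarrow> real" where
  "gk \<alpha> k s = (if \<bar>s\<bar> \<le> sqrt 2 * \<alpha>
     then 1 / sqrt (\<alpha> * sqrt 2) * cos (pi / (2 * sqrt 2 * \<alpha>) * (2 * real k - 1) * s)
     else 0)"

end

theory Submission
  imports Defs
begin

text \<open>With \<open>a = \<surd>2 \<alpha>\<close> the kernel is the indicator of the diamond \<open>\<bar>s\<bar> + \<bar>t\<bar> \<le> a\<close>, whose
  section at \<open>s\<close> is the interval \<open>\<bar>t\<bar> \<le> a - \<bar>s\<bar>\<close>; integrating \<open>cos (\<omega>\<^sub>k t)\<close> over it
  shows that the \<open>g\<^sub>k\<close> are eigenfunctions with eigenvalues \<open>\<lambda>\<^sub>k\<close>. For fixed \<open>s\<close>, Bessel's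
  inequality and Cauchy-Schwarz applied to the kernel section \<open>X(s,\<cdot>)\<close> bound the error of the
  \<open>n\<close>-th partial sum at \<open>s\<close>; integrating in \<open>s\<close>, the squared error is at most
  \<open>\<parallel>f\<parallel>\<^sup>2 (2a\<^sup>2 - \<Sum>\<^sub>k\<^sub>\<le>\<^sub>n \<lambda>\<^sub>k\<^sup>2)\<close>, where \<open>2a\<^sup>2\<close> is the area of the diamond.
  Since \<open>\<Sum> 1/(2k-1)\<^sup>2 = \<pi>\<^sup>2/8\<close>, the \<open>\<lambda>\<^sub>k\<^sup>2\<close> sum to exactly \<open>2a\<^sup>2\<close>, so the bound tends to 0
  uniformly in \<open>f\<close>. For an element of the range, the orthogonal projection onto
  \<open>g\<^sub>1,\<dots>,g\<^sub>n\<close> approximates at least as well as the partial sum of the operator series.\<close>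

section \<open>Orthonormal systems in \<open>L\<^sup>2[-1,1]\<close>\<close>

lemma finite_measure_I11: "finite_measure I11"
  by (rule finite_measure_lebesgue_on) auto

lemma measurable_ident_I11 [measurable]: "(\<lambda>t. t) \<in> borel_measurable I11"
  by (rule continuous_imp_measurable_on_sets_lebesgue) (auto intro: continuous_intros)

lemma continuous_on_imp_measurable_I11: "continuous_on {-1..1} h \<Longrightarrow> h \<in> borel_measurable I11"
  by (rule continuous_imp_measurable_on_sets_lebesgue) auto

lemma L2_bounded:
  assumes "h \<in> borel_measurable I11" and "\<And>t. \<bar>h t\<bar> \<le> B"
  shows "L2 h"
proof -
  have "norm ((h t)\<^sup>2) \<le> B\<^sup>2" for t
    using power_mono[OF assms(2) abs_ge_zero, of t 2] by simp
  then have "integrable I11 (\<lambda>t. (h t)\<^sup>2)"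
    using assms(1) by (intro finite_measure.integrable_const_bound[OF finite_measure_I11]) auto
  then show ?thesis unfolding L2_def using assms(1) by simp
qed

lemma L2_integrable_mult:
  assumes "L2 f" "L2 g"
  shows "integrable I11 (\<lambda>t. f t * g t)"
proof (rule Bochner_Integration.integrable_bound)
  show "integrable I11 (\<lambda>t. (f t)\<^sup>2 + (g t)\<^sup>2)" using assms unfolding L2_def by auto
  show "(\<lambda>t. f t * g t) \<in> borel_measurable I11" using assms unfolding L2_def by auto
  have "\<bar>x * y\<bar> \<le> x\<^sup>2 + y\<^sup>2" for x y :: real
    using sum_squares_bound[of "\<bar>x\<bar>" "\<bar>y\<bar>"] mult_nonneg_nonneg[OF abs_ge_zero abs_ge_zero, of x y]
    unfolding abs_mult power2_abs by linarith
  then show "AE t in I11. norm (f t * g t) \<le> norm ((f t)\<^sup>2 + (g t)\<^sup>2)" by simp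
qed

lemma L2_add: "L2 f \<Longrightarrow> L2 g \<Longrightarrow> L2 (\<lambda>t. f t + g t)"
  using L2_integrable_mult[of f g] unfolding L2_def power2_sum by (auto simp: mult.assoc)

lemma L2_cmult: "L2 f \<Longrightarrow> L2 (\<lambda>t. c * f t)"
  unfolding L2_def power_mult_distrib by auto

lemma L2_diff: "L2 f \<Longrightarrow> L2 g \<Longrightarrow> L2 (\<lambda>t. f t - g t)"
  using L2_add[OF _ L2_cmult, of f g "-1"] by simp

lemma L2_sum: "(\<And>k. k \<in> A \<Longrightarrow> L2 (g k)) \<Longrightarrow> L2 (\<lambda>t. \<Sum>k\<in>A. g k t)"
proof (induction A rule: infinite_finite_induct)
  case (insert k A)
  then show ?case by (simp add: L2_add)
qed (simp_all add: L2_def)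

lemma l2_inner_commute: "l2_inner f g = l2_inner g f"
  unfolding l2_inner_def by (simp add: mult.commute)

lemma l2_inner_self_nonneg: "0 \<le> l2_inner f f"
  unfolding l2_inner_def by simp

lemma l2_inner_diff_left:
  "L2 f \<Longrightarrow> L2 g \<Longrightarrow> L2 h \<Longrightarrow> l2_inner (\<lambda>t. f t - g t) h = l2_inner f h - l2_inner g h"
  unfolding l2_inner_def left_diff_distrib by (simp add: L2_integrable_mult)

lemma l2_inner_sum_left:
  assumes "\<And>k. k \<in> A \<Longrightarrow> L2 (g k)" "L2 h"
  shows "l2_inner (\<lambda>t. \<Sum>k\<in>A. c k * g k t) h = (\<Sum>k\<in>A. c k * l2_inner (g k) h)"
  unfolding l2_inner_def sum_distrib_right mult.assoc
  using assms by (simp add: L2_integrable_mult)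

lemma quadratic_nonneg_imp_discriminant:
  fixes A B C :: real
  assumes "0 \<le> A" and nonneg: "\<And>x. 0 \<le> x\<^sup>2 * A - 2 * x * B + C"
  shows "B\<^sup>2 \<le> A * C"
proof (cases "A = 0")
  case True
  have "B = 0"
  proof (rule ccontr)
    assume "B \<noteq> 0"
    then show False using nonneg[of "(C + 1) / (2 * B)"] True by (simp add: field_simps)
  qed
  then show ?thesis using True by simp
next
  case False
  then have "0 < A" using \<open>0 \<le> A\<close> by simp
  then show ?thesis using nonneg[of "B / A"] by (simp add: power2_eq_square field_simps)
qed

lemma l2_inner_cauchy_schwarz:
  assumes f: "L2 f" and g: "L2 g"
  shows "(l2_inner f g)\<^sup>2 \<le> l2_inner f f * l2_inner g g"
proof (rule quadratic_nonneg_imp_discriminant[OF l2_inner_self_nonneg])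
  fix x :: real
  have "(\<lambda>t. (x * f t - g t) * (x * f t - g t)) = (\<lambda>t. x\<^sup>2 * (f t * f t) - 2 * x * (f t * g t) + g t * g t)"
    by (simp add: fun_eq_iff power2_eq_square algebra_simps)
  then have "l2_inner (\<lambda>t. x * f t - g t) (\<lambda>t. x * f t - g t) = x\<^sup>2 * l2_inner f f - 2 * x * l2_inner f g + l2_inner g g"
    unfolding l2_inner_def using L2_integrable_mult[OF f f] L2_integrable_mult[OF f g] L2_integrable_mult[OF g g]
    by simp
  then show "0 \<le> x\<^sup>2 * l2_inner f f - 2 * x * l2_inner f g + l2_inner g g"
    by (metis l2_inner_self_nonneg)
qed

definition l2_orthonormal :: "('i \<Rightarrow> real \<Rightarrow> real) \<Rightarrow> 'i set \<Rightarrow> bool" where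
  "l2_orthonormal g A \<longleftrightarrow>
     (\<forall>k\<in>A. L2 (g k)) \<and> (\<forall>j\<in>A. \<forall>k\<in>A. l2_inner (g j) (g k) = (if j = k then 1 else 0))"

lemma l2_orthonormal_subset: "l2_orthonormal g A \<Longrightarrow> B \<subseteq> A \<Longrightarrow> l2_orthonormal g B"
  unfolding l2_orthonormal_def by blast

lemma l2_inner_orthonormal_sum:
  assumes "finite A" "l2_orthonormal g A" "j \<in> A"
  shows "l2_inner (\<lambda>t. \<Sum>k\<in>A. c k * g k t) (g j) = c j"
  using assms by (simp add: l2_orthonormal_def l2_inner_sum_left if_distrib[of "(*) _"] cong: if_cong)

lemma l2_norm_sq_diff_orthonormal_sum:
  fixes c :: "'i \<Rightarrow> real"
  assumes "finite A" and on: "l2_orthonormal g A" and h: "L2 h"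
  defines "S \<equiv> \<lambda>t. \<Sum>k\<in>A. c k * g k t"
  shows "l2_inner (\<lambda>t. h t - S t) (\<lambda>t. h t - S t)
    = l2_inner h h - 2 * (\<Sum>k\<in>A. c k * l2_inner (g k) h) + (\<Sum>k\<in>A. (c k)\<^sup>2)"
proof -
  have gk: "\<And>k. k \<in> A \<Longrightarrow> L2 (g k)" using on unfolding l2_orthonormal_def by blast
  then have S: "L2 S" unfolding S_def by (intro L2_sum L2_cmult)
  have Sh: "l2_inner S h = (\<Sum>k\<in>A. c k * l2_inner (g k) h)"
    unfolding S_def by (intro l2_inner_sum_left gk h)
  have "l2_inner S S = (\<Sum>k\<in>A. c k * l2_inner (g k) S)"
    unfolding S_def by (intro l2_inner_sum_left gk S[unfolded S_def])
  also have "\<dots> = (\<Sum>k\<in>A. c k * c k)"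
    by (intro sum.cong refl) (simp add: l2_inner_commute[of "g _"] S_def l2_inner_orthonormal_sum[OF assms(1) on])
  finally have SS: "l2_inner S S = (\<Sum>k\<in>A. (c k)\<^sup>2)" by (simp add: power2_eq_square)
  have "l2_inner (\<lambda>t. h t - S t) (\<lambda>t. h t - S t) = l2_inner h (\<lambda>t. h t - S t) - l2_inner S (\<lambda>t. h t - S t)"
    using h S by (intro l2_inner_diff_left L2_diff)
  also have "\<dots> = (l2_inner h h - l2_inner S h) - (l2_inner S h - l2_inner S S)"
    using h S by (simp add: l2_inner_commute[of _ "\<lambda>t. h t - S t"] l2_inner_diff_left l2_inner_commute[of h S])
  finally show ?thesis unfolding Sh SS by simp
qed

lemma bessel_identity:
  assumes "finite A" "l2_orthonormal g A" "L2 u"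
  shows "l2_inner (\<lambda>t. u t - (\<Sum>k\<in>A. l2_inner (g k) u * g k t)) (\<lambda>t. u t - (\<Sum>k\<in>A. l2_inner (g k) u * g k t))
    = l2_inner u u - (\<Sum>k\<in>A. (l2_inner (g k) u)\<^sup>2)"
  using l2_norm_sq_diff_orthonormal_sum[OF assms, of "\<lambda>k. l2_inner (g k) u"]
  by (simp add: power2_eq_square)

lemma l2_inner_bessel_residual_bound:
  assumes "finite A" and on: "l2_orthonormal g A" and u: "L2 u" and f: "L2 f"
  shows "(l2_inner u f - (\<Sum>k\<in>A. l2_inner (g k) u * l2_inner (g k) f))\<^sup>2
    \<le> (l2_inner u u - (\<Sum>k\<in>A. (l2_inner (g k) u)\<^sup>2)) * l2_inner f f"
proof -
  define r where "r t = u t - (\<Sum>k\<in>A. l2_inner (g k) u * g k t)" for t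
  have gk: "\<And>k. k \<in> A \<Longrightarrow> L2 (g k)" using on unfolding l2_orthonormal_def by blast
  have r: "L2 r" unfolding r_def by (intro L2_diff L2_sum L2_cmult u gk)
  have "l2_inner r f = l2_inner u f - (\<Sum>k\<in>A. l2_inner (g k) u * l2_inner (g k) f)"
    unfolding r_def using u f gk
    by (simp add: l2_inner_diff_left l2_inner_sum_left L2_sum L2_cmult)
  moreover have "l2_inner r r = l2_inner u u - (\<Sum>k\<in>A. (l2_inner (g k) u)\<^sup>2)"
    unfolding r_def by (rule bessel_identity[OF assms(1-3)])
  ultimately show ?thesis using l2_inner_cauchy_schwarz[OF r f] by simp
qed

lemma orthonormal_projection_least_squares:
  assumes "finite A" "l2_orthonormal g A" "L2 h"
  shows "l2_inner (\<lambda>t. h t - (\<Sum>k\<in>A. l2_inner (g k) h * g k t)) (\<lambda>t. h t - (\<Sum>k\<in>A. l2_inner (g k) h * g k t))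
    \<le> l2_inner (\<lambda>t. h t - (\<Sum>k\<in>A. c k * g k t)) (\<lambda>t. h t - (\<Sum>k\<in>A. c k * g k t))"
proof -
  define d where "d k = l2_inner (g k) h" for k
  have "(\<Sum>k\<in>A. (c k - d k)\<^sup>2) = (\<Sum>k\<in>A. (c k)\<^sup>2) - 2 * (\<Sum>k\<in>A. c k * d k) + (\<Sum>k\<in>A. (d k)\<^sup>2)"
    by (simp add: power2_diff sum.distrib sum_subtractf sum_distrib_left mult.assoc)
  moreover have "0 \<le> (\<Sum>k\<in>A. (c k - d k)\<^sup>2)" by (simp add: sum_nonneg)
  moreover have "(\<Sum>k\<in>A. d k * d k) = (\<Sum>k\<in>A. (d k)\<^sup>2)" by (simp add: power2_eq_square)
  ultimately show ?thesis
    unfolding l2_norm_sq_diff_orthonormal_sum[OF assms] unfolding d_def[symmetric] by linarith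
qed

section \<open>The diamond kernel and its eigenfunctions\<close>

definition diamond_kernel :: "real \<Rightarrow> real \<Rightarrow> real \<Rightarrow> real" where
  "diamond_kernel a s t = (if \<bar>s\<bar> + \<bar>t\<bar> \<le> a then 1 else 0)"

definition diamond_op :: "real \<Rightarrow> (real \<Rightarrow> real) \<Rightarrow> real \<Rightarrow> real" where
  "diamond_op a f s = (\<integral>t. diamond_kernel a s t * f t \<partial>I11)"

definition diamond_freq :: "real \<Rightarrow> nat \<Rightarrow> real" where
  "diamond_freq a k = pi * (2 * real k - 1) / (2 * a)"

definition diamond_eigfun :: "real \<Rightarrow> nat \<Rightarrow> real \<Rightarrow> real" where
  "diamond_eigfun a k t = (if \<bar>t\<bar> \<le> a then cos (diamond_freq a k * t) / sqrt a else 0)"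

definition diamond_eigval :: "real \<Rightarrow> nat \<Rightarrow> real" where
  "diamond_eigval a k = (-1) ^ (k - 1) * 2 / diamond_freq a k"

definition diamond_section_length :: "real \<Rightarrow> real \<Rightarrow> real" where
  "diamond_section_length a s = (if \<bar>s\<bar> \<le> a then 2 * (a - \<bar>s\<bar>) else 0)"

lemma Xker_eq_diamond_kernel: "Xker \<alpha> s t = diamond_kernel (sqrt 2 * \<alpha>) s t"
proof -
  have scale: "\<bar>x * (sqrt 2 / 2)\<bar> \<le> \<alpha> \<longleftrightarrow> \<bar>x\<bar> \<le> sqrt 2 * \<alpha>" for x
  proof -
    have "\<bar>x * (sqrt 2 / 2)\<bar> \<le> \<alpha> \<longleftrightarrow> \<bar>x\<bar> * sqrt 2 \<le> (sqrt 2 * \<alpha>) * sqrt 2"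
      by (simp add: abs_mult field_simps)
    also have "\<dots> \<longleftrightarrow> \<bar>x\<bar> \<le> sqrt 2 * \<alpha>" by (rule mult_le_cancel_right_pos) simp
    finally show ?thesis .
  qed
  have "s * cos (pi / 4) + t * sin (pi / 4) = (s + t) * (sqrt 2 / 2)"
    and "- s * sin (pi / 4) + t * cos (pi / 4) = (t - s) * (sqrt 2 / 2)"
    by (simp_all add: cos_45 sin_45 algebra_simps)
  then have "\<bar>s * cos (pi / 4) + t * sin (pi / 4)\<bar> \<le> \<alpha> \<longleftrightarrow> \<bar>s + t\<bar> \<le> sqrt 2 * \<alpha>"
    and "\<bar>- s * sin (pi / 4) + t * cos (pi / 4)\<bar> \<le> \<alpha> \<longleftrightarrow> \<bar>t - s\<bar> \<le> sqrt 2 * \<alpha>"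
    by (simp_all only: scale)
  moreover have "\<bar>s + t\<bar> \<le> sqrt 2 * \<alpha> \<and> \<bar>t - s\<bar> \<le> sqrt 2 * \<alpha> \<longleftrightarrow> \<bar>s\<bar> + \<bar>t\<bar> \<le> sqrt 2 * \<alpha>"
    by (cases "s \<ge> 0"; cases "t \<ge> 0") auto
  ultimately show ?thesis unfolding Xker_def diamond_kernel_def Let_def by presburger
qed

lemma TX_eq_diamond_op: "TX \<alpha> = diamond_op (sqrt 2 * \<alpha>)"
  by (intro ext) (simp add: TX_def diamond_op_def Xker_eq_diamond_kernel)

lemma gk_eq_diamond_eigfun: "0 < \<alpha> \<Longrightarrow> gk \<alpha> k = diamond_eigfun (sqrt 2 * \<alpha>) k"
  unfolding gk_def diamond_eigfun_def diamond_freq_def by (auto simp: fun_eq_iff field_simps)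

lemma lam_eq_diamond_eigval: "0 < \<alpha> \<Longrightarrow> lam \<alpha> k = diamond_eigval (sqrt 2 * \<alpha>) k"
  unfolding lam_def diamond_eigval_def diamond_freq_def by (auto simp: field_simps)

lemma diamond_op_eq_l2_inner: "diamond_op a f s = l2_inner (diamond_kernel a s) f"
  unfolding diamond_op_def l2_inner_def ..

lemma I11_integral_restrict_Icc:
  fixes h :: "real \<Rightarrow> real"
  assumes b: "0 \<le> b" "b \<le> 1" and hi: "(h has_integral v) {-b..b}" and hc: "continuous_on UNIV h"
  shows "integrable I11 (\<lambda>t. if t \<in> {-b..b} then h t else 0)"
    and "(\<integral>t. (if t \<in> {-b..b} then h t else 0) \<partial>I11) = v"
proof -
  have [measurable]: "h \<in> borel_measurable I11"
    by (intro continuous_on_imp_measurable_I11 continuous_on_subset[OF hc]) auto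
  obtain B where B: "\<And>t. t \<in> {-b..b} \<Longrightarrow> norm (h t) \<le> B"
    using compact_imp_bounded[OF compact_continuous_image[OF continuous_on_subset[OF hc] compact_Icc]]
    unfolding bounded_iff by blast
  then have "norm (if t \<in> {-b..b} then h t else 0) \<le> max B 0" for t by (auto simp: le_max_iff_disj)
  then show int: "integrable I11 (\<lambda>t. if t \<in> {-b..b} then h t else 0)"
    by (intro finite_measure.integrable_const_bound[OF finite_measure_I11, where B="max B 0"]) auto
  have "((\<lambda>t. if t \<in> {-b..b} then h t else 0) has_integral v) {-1..1}"
    using has_integral_restrict_closed_subinterval[of h v "-b" b "-1" 1] hi b by simp
  then show "(\<integral>t. (if t \<in> {-b..b} then h t else 0) \<partial>I11) = v"
    using lebesgue_integral_eq_integral[OF int] by (simp add: integral_unique)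
qed

lemma has_integral_cos_sym:
  fixes b \<mu> :: real
  assumes "0 \<le> b" "\<mu> \<noteq> 0"
  shows "((\<lambda>t. cos (\<mu> * t)) has_integral 2 * sin (\<mu> * b) / \<mu>) {-b..b}"
proof -
  have "((\<lambda>t. sin (\<mu> * t) / \<mu>) has_real_derivative cos (\<mu> * x)) (at x within {-b..b})" for x
    using assms by (auto intro!: derivative_eq_intros)
  then have "((\<lambda>t. cos (\<mu> * t)) has_integral (sin (\<mu> * b) / \<mu> - sin (\<mu> * (-b)) / \<mu>)) {-b..b}"
    using fundamental_theorem_of_calculus[of "-b" b "\<lambda>t. sin (\<mu> * t) / \<mu>" "\<lambda>t. cos (\<mu> * t)"] assms
    by (simp add: has_real_derivative_iff_has_vector_derivative)
  then show ?thesis by simp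
qed

lemma has_integral_cos_sym_pi_multiple:
  fixes b \<mu> :: real
  assumes "0 \<le> b" "\<mu> * b = pi * of_int m"
  shows "((\<lambda>t. cos (\<mu> * t)) has_integral (if \<mu> = 0 then 2 * b else 0)) {-b..b}"
proof (cases "\<mu> = 0")
  case True
  then show ?thesis using has_integral_const_real[of "1::real" "-b" b] assms(1) by simp
next
  case False
  then show ?thesis using has_integral_cos_sym[OF assms(1) False] assms(2) by simp
qed

lemma diamond_freq_mult: "0 < a \<Longrightarrow> diamond_freq a k * a = pi * (2 * real k - 1) / 2"
  unfolding diamond_freq_def by (simp add: field_simps)

lemma diamond_freq_pos: "0 < a \<Longrightarrow> 1 \<le> k \<Longrightarrow> 0 < diamond_freq a k"
  unfolding diamond_freq_def by (auto intro!: divide_pos_pos mult_pos_pos)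

lemma sin_diamond_freq_mult: "0 < a \<Longrightarrow> 1 \<le> k \<Longrightarrow> sin (diamond_freq a k * a) = (-1) ^ (k - 1)"
  and cos_diamond_freq_mult: "0 < a \<Longrightarrow> 1 \<le> k \<Longrightarrow> cos (diamond_freq a k * a) = 0"
proof -
  assume "0 < a" "1 \<le> k"
  then have e: "diamond_freq a k * a = real (k - 1) * pi + pi / 2"
    by (subst diamond_freq_mult) (simp_all add: of_nat_diff field_simps)
  show "sin (diamond_freq a k * a) = (-1) ^ (k - 1)" unfolding e sin_add by simp
  show "cos (diamond_freq a k * a) = 0" unfolding e cos_add by simp
qed

lemma diamond_eigfun_measurable [measurable]: "diamond_eigfun a k \<in> borel_measurable I11"
  unfolding diamond_eigfun_def by measurable

lemma diamond_kernel_measurable [measurable]: "diamond_kernel a s \<in> borel_measurable I11"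
  unfolding diamond_kernel_def by measurable

lemma L2_diamond_eigfun: "0 < a \<Longrightarrow> L2 (diamond_eigfun a k)"
  by (rule L2_bounded[OF diamond_eigfun_measurable, of _ _ "1 / sqrt a"])
    (auto simp: diamond_eigfun_def abs_cos_le_one divide_right_mono)

lemma L2_diamond_kernel: "L2 (diamond_kernel a s)"
  by (rule L2_bounded[OF diamond_kernel_measurable, of _ _ 1]) (simp add: diamond_kernel_def)

lemma l2_inner_diamond_eigfun_kernel:
  assumes a: "0 < a" "a \<le> 1" and k: "1 \<le> k"
  shows "l2_inner (diamond_eigfun a k) (diamond_kernel a s) = diamond_eigval a k * diamond_eigfun a k s"
proof (cases "\<bar>s\<bar> \<le> a")
  case True
  define b where "b = a - \<bar>s\<bar>"
  define \<omega> where "\<omega> = diamond_freq a k"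
  have b: "0 \<le> b" "b \<le> 1" using True a unfolding b_def by auto
  have \<omega>: "\<omega> \<noteq> 0" using diamond_freq_pos[OF a(1) k] unfolding \<omega>_def by simp
  have "((\<lambda>t. cos (\<omega> * t) / sqrt a) has_integral (2 * sin (\<omega> * b) / \<omega>) / sqrt a) {-b..b}"
    by (intro has_integral_divide has_integral_cos_sym b \<omega>)
  moreover have "continuous_on UNIV (\<lambda>t. cos (\<omega> * t) / sqrt a)"
    by (intro continuous_intros) (use a in auto)
  moreover have "diamond_eigfun a k t * diamond_kernel a s t = (if t \<in> {-b..b} then cos (\<omega> * t) / sqrt a else 0)" for t
    using True by (auto simp: diamond_eigfun_def diamond_kernel_def b_def \<omega>_def)
  ultimately have "l2_inner (diamond_eigfun a k) (diamond_kernel a s) = (2 * sin (\<omega> * b) / \<omega>) / sqrt a"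
    unfolding l2_inner_def using I11_integral_restrict_Icc(2)[OF b] by presburger
  also have "sin (\<omega> * b) = (-1) ^ (k - 1) * cos (\<omega> * s)"
  proof -
    have "sin (\<omega> * b) = (-1) ^ (k - 1) * cos (\<omega> * \<bar>s\<bar>)"
      unfolding b_def right_diff_distrib sin_diff \<omega>_def sin_diamond_freq_mult[OF a(1) k]
        cos_diamond_freq_mult[OF a(1) k] by simp
    then show ?thesis by (cases "0 \<le> s") auto
  qed
  finally show ?thesis
    unfolding diamond_eigval_def diamond_eigfun_def \<omega>_def using True by simp
next
  case False
  then have "(\<lambda>t. diamond_eigfun a k t * diamond_kernel a s t) = (\<lambda>t. 0)"
    by (auto simp: fun_eq_iff diamond_kernel_def)
  then show ?thesis using False unfolding l2_inner_def by (simp add: diamond_eigfun_def)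
qed

lemma l2_inner_diamond_kernel_self:
  assumes "a \<le> 1"
  shows "l2_inner (diamond_kernel a s) (diamond_kernel a s) = diamond_section_length a s"
proof (cases "\<bar>s\<bar> \<le> a")
  case True
  define b where "b = a - \<bar>s\<bar>"
  have b: "0 \<le> b" "b \<le> 1" using True assms unfolding b_def by auto
  have "((\<lambda>t. 1) has_integral 2 * b) {-b..b}"
    using has_integral_const_real[of "1::real" "-b" b] b by simp
  moreover have "diamond_kernel a s t * diamond_kernel a s t = (if t \<in> {-b..b} then 1 else 0)" for t
    using True by (auto simp: diamond_kernel_def b_def)
  ultimately show ?thesis
    unfolding l2_inner_def diamond_section_length_def b_def
    using True I11_integral_restrict_Icc(2)[OF b, of "\<lambda>t. 1"] by (simp add: b_def)
next
  case False
  then have "(\<lambda>t. diamond_kernel a s t * diamond_kernel a s t) = (\<lambda>t. 0)"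
    by (auto simp: fun_eq_iff diamond_kernel_def)
  then show ?thesis using False unfolding l2_inner_def by (simp add: diamond_section_length_def)
qed

lemma has_integral_diamond_section_length:
  fixes a :: real
  assumes "0 < a"
  shows "((\<lambda>t. 2 * (a - \<bar>t\<bar>)) has_integral 2 * a\<^sup>2) {-a..a}"
proof -
  have "((\<lambda>t. 2 * a * t + t\<^sup>2) has_real_derivative 2 * (a - \<bar>x\<bar>)) (at x within {-a..0})"
    if "x \<in> {-a..0}" for x
    using that by (auto intro!: derivative_eq_intros)
  then have left: "((\<lambda>t. 2 * (a - \<bar>t\<bar>)) has_integral a\<^sup>2) {-a..0}"
    using fundamental_theorem_of_calculus[of "-a" 0 "\<lambda>t. 2 * a * t + t\<^sup>2" "\<lambda>t. 2 * (a - \<bar>t\<bar>)"] assms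
    by (simp add: has_real_derivative_iff_has_vector_derivative power2_eq_square)
  have "((\<lambda>t. 2 * a * t - t\<^sup>2) has_real_derivative 2 * (a - \<bar>x\<bar>)) (at x within {0..a})"
    if "x \<in> {0..a}" for x
    using that by (auto intro!: derivative_eq_intros)
  then have right: "((\<lambda>t. 2 * (a - \<bar>t\<bar>)) has_integral a\<^sup>2) {0..a}"
    using fundamental_theorem_of_calculus[of 0 a "\<lambda>t. 2 * a * t - t\<^sup>2" "\<lambda>t. 2 * (a - \<bar>t\<bar>)"] assms
    by (simp add: has_real_derivative_iff_has_vector_derivative power2_eq_square)
  show ?thesis
    using has_integral_combine[of "-a" 0 a, OF _ _ left right] assms by simp
qed

lemma integrable_diamond_section_length: "0 < a \<Longrightarrow> a \<le> 1 \<Longrightarrow> integrable I11 (diamond_section_length a)"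
  and integral_diamond_section_length:
    "0 < a \<Longrightarrow> a \<le> 1 \<Longrightarrow> (\<integral>t. diamond_section_length a t \<partial>I11) = 2 * a\<^sup>2"
proof -
  assume a: "0 < a" "a \<le> 1"
  have "diamond_section_length a = (\<lambda>t. if t \<in> {-a..a} then 2 * (a - \<bar>t\<bar>) else 0)"
    by (auto simp: fun_eq_iff diamond_section_length_def)
  moreover have "continuous_on UNIV (\<lambda>t. 2 * (a - \<bar>t\<bar>))" by (intro continuous_intros)
  ultimately show "integrable I11 (diamond_section_length a)"
    "(\<integral>t. diamond_section_length a t \<partial>I11) = 2 * a\<^sup>2"
    using I11_integral_restrict_Icc[OF _ a(2) has_integral_diamond_section_length[OF a(1)]] a by auto
qed

lemma diamond_eigfun_orthonormal:
  assumes a: "0 < a" "a \<le> 1"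
  shows "l2_orthonormal (diamond_eigfun a) {1..}"
  unfolding l2_orthonormal_def
proof (intro conjI ballI)
  fix j k :: nat assume j: "j \<in> {1..}" and k: "k \<in> {1..}"
  define \<mu>1 where "\<mu>1 = diamond_freq a j - diamond_freq a k"
  define \<mu>2 where "\<mu>2 = diamond_freq a j + diamond_freq a k"
  have m1: "\<mu>1 * a = pi * of_int (int j - int k)"
    unfolding \<mu>1_def left_diff_distrib diamond_freq_mult[OF a(1)] by (simp add: field_simps)
  have m2: "\<mu>2 * a = pi * of_int (int j + int k - 1)"
    unfolding \<mu>2_def distrib_right diamond_freq_mult[OF a(1)] by (simp add: field_simps)
  have "\<mu>2 \<noteq> 0" using diamond_freq_pos[OF a(1), of j] diamond_freq_pos[OF a(1), of k] j k
    unfolding \<mu>2_def by simp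
  moreover have "\<mu>1 = 0 \<longleftrightarrow> j = k" unfolding \<mu>1_def diamond_freq_def using a by (auto simp: field_simps)
  ultimately have "((\<lambda>t. (cos (\<mu>1 * t) + cos (\<mu>2 * t)) / (2 * a)) has_integral (if j = k then 1 else 0)) {-a..a}"
    using has_integral_divide[OF has_integral_add[OF has_integral_cos_sym_pi_multiple[OF _ m1]
          has_integral_cos_sym_pi_multiple[OF _ m2]], of "2 * a"] a
    by (simp split: if_splits)
  moreover have "continuous_on UNIV (\<lambda>t. (cos (\<mu>1 * t) + cos (\<mu>2 * t)) / (2 * a))"
    using a by (intro continuous_intros) auto
  moreover have "diamond_eigfun a j t * diamond_eigfun a k t
      = (if t \<in> {-a..a} then (cos (\<mu>1 * t) + cos (\<mu>2 * t)) / (2 * a) else 0)" for t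
    using a by (auto simp: diamond_eigfun_def \<mu>1_def \<mu>2_def cos_times_cos left_diff_distrib distrib_right)
  ultimately show "l2_inner (diamond_eigfun a j) (diamond_eigfun a k) = (if j = k then 1 else 0)"
    unfolding l2_inner_def using I11_integral_restrict_Icc(2)[OF _ a(2)] a by simp
qed (use L2_diamond_eigfun a in blast)

section \<open>Convergence of the eigen-expansion\<close>

lemma diamond_op_measurable:
  assumes f: "f \<in> borel_measurable I11"
  shows "diamond_op a f \<in> borel_measurable I11"
proof -
  have [measurable]: "snd \<in> borel_measurable (I11 \<Otimes>\<^sub>M I11)" "fst \<in> borel_measurable (I11 \<Otimes>\<^sub>M I11)"
    "(\<lambda>p. f (snd p)) \<in> borel_measurable (I11 \<Otimes>\<^sub>M I11)"
    by (auto intro: measurable_compose[OF measurable_snd] measurable_compose[OF measurable_fst] f)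
  have "sigma_finite_measure I11"
    using finite_measure_I11 by (rule finite_measure.axioms(1))
  then show ?thesis
    unfolding diamond_op_def diamond_kernel_def
    by (rule sigma_finite_measure.borel_measurable_lebesgue_integral) (simp add: case_prod_beta')
qed

lemma diamond_op_cmult: "diamond_op a (\<lambda>t. c * f t) s = c * diamond_op a f s"
  unfolding diamond_op_def by (simp add: mult.left_commute)

lemma diamond_op_eigfun:
  "0 < a \<Longrightarrow> a \<le> 1 \<Longrightarrow> 1 \<le> k \<Longrightarrow> diamond_op a (diamond_eigfun a k) s = diamond_eigval a k * diamond_eigfun a k s"
  by (simp add: diamond_op_eq_l2_inner l2_inner_commute[of "diamond_kernel a s"] l2_inner_diamond_eigfun_kernel)

lemma diamond_eigfun_in_range:
  assumes a: "0 < a" "a \<le> 1" and k: "1 \<le> k"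
  shows "\<exists>f. L2 f \<and> diamond_op a f = diamond_eigfun a k"
proof (intro exI conjI)
  have "diamond_eigval a k \<noteq> 0"
    unfolding diamond_eigval_def using diamond_freq_pos[OF a(1) k] by simp
  then show "diamond_op a (\<lambda>t. 1 / diamond_eigval a k * diamond_eigfun a k t) = diamond_eigfun a k"
    unfolding diamond_op_cmult diamond_op_eigfun[OF a k] by simp
  show "L2 (\<lambda>t. 1 / diamond_eigval a k * diamond_eigfun a k t)"
    by (intro L2_cmult L2_diamond_eigfun a)
qed

lemma diamond_op_residual_sq_le:
  assumes a: "0 < a" "a \<le> 1" and f: "L2 f"
  shows "(diamond_op a f s - (\<Sum>k=1..n. diamond_eigval a k * l2_inner (diamond_eigfun a k) f * diamond_eigfun a k s))\<^sup>2
    \<le> (diamond_section_length a s - (\<Sum>k=1..n. (diamond_eigval a k * diamond_eigfun a k s)\<^sup>2)) * l2_inner f f"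
proof -
  have on: "l2_orthonormal (diamond_eigfun a) {1..n}"
    by (rule l2_orthonormal_subset[OF diamond_eigfun_orthonormal[OF a]]) auto
  have coeff: "l2_inner (diamond_eigfun a k) (diamond_kernel a s) = diamond_eigval a k * diamond_eigfun a k s"
    if "k \<in> {1..n}" for k
    using l2_inner_diamond_eigfun_kernel[OF a] that by simp
  have "(\<Sum>k=1..n. l2_inner (diamond_eigfun a k) (diamond_kernel a s) * l2_inner (diamond_eigfun a k) f)
      = (\<Sum>k=1..n. diamond_eigval a k * l2_inner (diamond_eigfun a k) f * diamond_eigfun a k s)"
    by (rule sum.cong) (simp_all add: coeff mult_ac)
  moreover have "(\<Sum>k=1..n. (l2_inner (diamond_eigfun a k) (diamond_kernel a s))\<^sup>2)
      = (\<Sum>k=1..n. (diamond_eigval a k * diamond_eigfun a k s)\<^sup>2)"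
    by (rule sum.cong) (simp_all add: coeff)
  ultimately show ?thesis
    using l2_inner_bessel_residual_bound[OF _ on L2_diamond_kernel f, of a s]
    by (simp add: diamond_op_eq_l2_inner l2_inner_diamond_kernel_self[OF a(2)])
qed

lemma integrable_diamond_bessel_defect:
  "0 < a \<Longrightarrow> a \<le> 1 \<Longrightarrow>
    integrable I11 (\<lambda>s. diamond_section_length a s - (\<Sum>k=1..n. (diamond_eigval a k * diamond_eigfun a k s)\<^sup>2))"
  and integral_diamond_bessel_defect:
  "0 < a \<Longrightarrow> a \<le> 1 \<Longrightarrow>
    (\<integral>s. diamond_section_length a s - (\<Sum>k=1..n. (diamond_eigval a k * diamond_eigfun a k s)\<^sup>2) \<partial>I11)
      = 2 * a\<^sup>2 - (\<Sum>k=1..n. (diamond_eigval a k)\<^sup>2)"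
proof -
  assume a: "0 < a" "a \<le> 1"
  have eq: "(\<lambda>s. diamond_section_length a s - (\<Sum>k=1..n. (diamond_eigval a k * diamond_eigfun a k s)\<^sup>2))
      = (\<lambda>s. diamond_section_length a s
          - (\<Sum>k=1..n. (diamond_eigval a k)\<^sup>2 * (diamond_eigfun a k s * diamond_eigfun a k s)))"
    by (simp add: fun_eq_iff power2_eq_square mult_ac)
  have eigfun_sq: "integrable I11 (\<lambda>s. diamond_eigfun a k s * diamond_eigfun a k s)"
    and eigfun_norm: "k \<in> {1..n} \<Longrightarrow> (\<integral>s. diamond_eigfun a k s * diamond_eigfun a k s \<partial>I11) = 1" for k
    using L2_integrable_mult[OF L2_diamond_eigfun L2_diamond_eigfun, OF a(1) a(1)]
      diamond_eigfun_orthonormal[OF a] by (auto simp: l2_orthonormal_def l2_inner_def)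
  show "integrable I11 (\<lambda>s. diamond_section_length a s - (\<Sum>k=1..n. (diamond_eigval a k * diamond_eigfun a k s)\<^sup>2))"
    unfolding eq using integrable_diamond_section_length[OF a] eigfun_sq by auto
  show "(\<integral>s. diamond_section_length a s - (\<Sum>k=1..n. (diamond_eigval a k * diamond_eigfun a k s)\<^sup>2) \<partial>I11)
      = 2 * a\<^sup>2 - (\<Sum>k=1..n. (diamond_eigval a k)\<^sup>2)"
    unfolding eq using integrable_diamond_section_length[OF a] eigfun_sq
    by (simp add: integral_diamond_section_length[OF a] eigfun_norm integral_sum)
qed

lemma diamond_op_residual_bound:
  fixes n :: nat
  assumes a: "0 < a" "a \<le> 1" and f: "L2 f"
  defines "R \<equiv> \<lambda>s. diamond_op a f s
    - (\<Sum>k=1..n. diamond_eigval a k * l2_inner (diamond_eigfun a k) f * diamond_eigfun a k s)"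
  shows "L2 R" and "l2_inner R R \<le> (2 * a\<^sup>2 - (\<Sum>k=1..n. (diamond_eigval a k)\<^sup>2)) * l2_inner f f"
proof -
  define P where "P s = diamond_section_length a s - (\<Sum>k=1..n. (diamond_eigval a k * diamond_eigfun a k s)\<^sup>2)" for s
  define C where "C = l2_inner f f"
  have R_le: "(R s)\<^sup>2 \<le> P s * C" for s
    unfolding R_def P_def C_def by (rule diamond_op_residual_sq_le[OF a f])
  have P_int: "integrable I11 P"
    unfolding P_def by (rule integrable_diamond_bessel_defect[OF a])
  have "f \<in> borel_measurable I11" using f unfolding L2_def by simp
  note [measurable] = diamond_op_measurable[OF this]
  have R_meas: "R \<in> borel_measurable I11" unfolding R_def by measurable
  have R_sq_int: "integrable I11 (\<lambda>s. (R s)\<^sup>2)"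
  proof (rule Bochner_Integration.integrable_bound)
    show "integrable I11 (\<lambda>s. P s * C)" using P_int by simp
    show "AE s in I11. norm ((R s)\<^sup>2) \<le> norm (P s * C)"
      using R_le order_trans[OF zero_le_power2 R_le] by (intro AE_I2) simp
  qed (use R_meas in measurable)
  then show "L2 R" unfolding L2_def using R_meas by simp
  have "l2_inner R R \<le> (\<integral>s. P s * C \<partial>I11)"
    unfolding l2_inner_def power2_eq_square[symmetric]
    using R_sq_int P_int R_le by (intro integral_mono) auto
  also have "\<dots> = (2 * a\<^sup>2 - (\<Sum>k=1..n. (diamond_eigval a k)\<^sup>2)) * C"
    unfolding P_def using integral_diamond_bessel_defect[OF a, of n] by simp
  finally show "l2_inner R R \<le> (2 * a\<^sup>2 - (\<Sum>k=1..n. (diamond_eigval a k)\<^sup>2)) * l2_inner f f"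
    unfolding C_def .
qed

lemma L2_diamond_op: "0 < a \<Longrightarrow> a \<le> 1 \<Longrightarrow> L2 f \<Longrightarrow> L2 (diamond_op a f)"
  using diamond_op_residual_bound(1)[of a f 0] by simp

lemma sums_inverse_odd_squares: "(\<lambda>i. 1 / (2 * real i + 1)\<^sup>2) sums (pi\<^sup>2 / 8)"
proof -
  define g where "g n = 1 / (real n + 1)\<^sup>2" for n :: nat
  have g: "g sums (pi\<^sup>2 / 6)" unfolding g_def using inverse_squares_sums by (simp add: add.commute)
  have "sum g {n * 2 ..< n * 2 + 2} = 1 / (2 * real n + 1)\<^sup>2 + g n / 4" for n
    by (simp add: numeral_2_eq_2 g_def field_simps power2_eq_square)
  then have "(\<lambda>n. 1 / (2 * real n + 1)\<^sup>2 + g n / 4) sums (pi\<^sup>2 / 6)"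
    using sums_group[OF g, of 2] by simp
  from sums_diff[OF this sums_divide[OF g, of 4]] show ?thesis by simp
qed

lemma diamond_eigval_squares_sums: "0 < a \<Longrightarrow> (\<lambda>i. (diamond_eigval a (Suc i))\<^sup>2) sums (2 * a\<^sup>2)"
proof -
  assume a: "0 < a"
  have "(diamond_eigval a (Suc i))\<^sup>2 = (16 * a\<^sup>2 / pi\<^sup>2) * (1 / (2 * real i + 1)\<^sup>2)" for i
    using a unfolding diamond_eigval_def diamond_freq_def by (simp add: power2_eq_square field_simps)
  then show ?thesis using sums_mult[OF sums_inverse_odd_squares, of "16 * a\<^sup>2 / pi\<^sup>2"] by simp
qed

lemma diamond_eigval_tail_tendsto:
  assumes "0 < a"
  shows "(\<lambda>n. 2 * a\<^sup>2 - (\<Sum>k=1..n. (diamond_eigval a k)\<^sup>2)) \<longlonglongrightarrow> 0"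
proof -
  have "(\<Sum>k=1..n. (diamond_eigval a k)\<^sup>2) = (\<Sum>i<n. (diamond_eigval a (Suc i))\<^sup>2)" for n
    using sum.atLeast1_atMost_eq[of "\<lambda>k. (diamond_eigval a k)\<^sup>2" n] by simp
  then have "(\<lambda>n. \<Sum>k=1..n. (diamond_eigval a k)\<^sup>2) \<longlonglongrightarrow> 2 * a\<^sup>2"
    using diamond_eigval_squares_sums[OF assms] unfolding sums_def by simp
  then show ?thesis
    using tendsto_diff[OF tendsto_const[of "2 * a\<^sup>2"]] by fastforce
qed

lemma diamond_op_partial_sums_uniform:
  assumes a: "0 < a" "a \<le> 1" and \<epsilon>: "0 < \<epsilon>"
  shows "\<exists>N. \<forall>n\<ge>N. \<forall>f. L2 f \<longrightarrow>
    l2_norm (\<lambda>s. diamond_op a f s - (\<Sum>k=1..n. diamond_eigval a k * l2_inner (diamond_eigfun a k) f * diamond_eigfun a k s))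
      \<le> \<epsilon> * l2_norm f"
proof -
  obtain N where N: "\<And>n. N \<le> n \<Longrightarrow> 2 * a\<^sup>2 - (\<Sum>k=1..n. (diamond_eigval a k)\<^sup>2) < \<epsilon>\<^sup>2"
    using order_tendstoD(2)[OF diamond_eigval_tail_tendsto[OF a(1)], of "\<epsilon>\<^sup>2"] \<epsilon>
    unfolding eventually_sequentially by auto
  show ?thesis
  proof (intro exI allI impI)
    fix n f assume n: "N \<le> n" and f: "L2 f"
    let ?R = "\<lambda>s. diamond_op a f s - (\<Sum>k=1..n. diamond_eigval a k * l2_inner (diamond_eigfun a k) f * diamond_eigfun a k s)"
    have "l2_inner ?R ?R \<le> (2 * a\<^sup>2 - (\<Sum>k=1..n. (diamond_eigval a k)\<^sup>2)) * l2_inner f f"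
      by (rule diamond_op_residual_bound(2)[OF a f])
    also have "\<dots> \<le> \<epsilon>\<^sup>2 * l2_inner f f"
      using N[OF n] l2_inner_self_nonneg by (intro mult_right_mono) auto
    finally show "l2_norm ?R \<le> \<epsilon> * l2_norm f"
      unfolding l2_norm_def using \<epsilon> real_sqrt_le_mono by (fastforce simp: real_sqrt_mult)
  qed
qed

lemma diamond_op_expansion_tendsto:
  assumes a: "0 < a" "a \<le> 1" and f: "L2 f"
  shows "(\<lambda>n. l2_norm (\<lambda>s. diamond_op a f s
    - (\<Sum>k=1..n. l2_inner (diamond_eigfun a k) (diamond_op a f) * diamond_eigfun a k s))) \<longlonglongrightarrow> 0"
proof (rule tendsto_sandwich[OF _ _ tendsto_const])
  define T where "T n = 2 * a\<^sup>2 - (\<Sum>k=1..n. (diamond_eigval a k)\<^sup>2)" for n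
  have "l2_norm (\<lambda>s. diamond_op a f s - (\<Sum>k=1..n. l2_inner (diamond_eigfun a k) (diamond_op a f) * diamond_eigfun a k s))
      \<le> sqrt (T n * l2_inner f f)" for n
  proof -
    have on: "l2_orthonormal (diamond_eigfun a) {1..n}"
      by (rule l2_orthonormal_subset[OF diamond_eigfun_orthonormal[OF a]]) auto
    show ?thesis
      unfolding l2_norm_def T_def
      using orthonormal_projection_least_squares[OF _ on L2_diamond_op[OF a f],
          of "\<lambda>k. diamond_eigval a k * l2_inner (diamond_eigfun a k) f"]
        diamond_op_residual_bound(2)[OF a f, of n]
      by (auto intro: real_sqrt_le_mono)
  qed
  then show "\<forall>\<^sub>F n in sequentially. l2_norm (\<lambda>s. diamond_op a f s
      - (\<Sum>k=1..n. l2_inner (diamond_eigfun a k) (diamond_op a f) * diamond_eigfun a k s)) \<le> sqrt (T n * l2_inner f f)"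
    by simp
  show "\<forall>\<^sub>F n in sequentially. 0 \<le> l2_norm (\<lambda>s. diamond_op a f s
      - (\<Sum>k=1..n. l2_inner (diamond_eigfun a k) (diamond_op a f) * diamond_eigfun a k s))"
    by (simp add: l2_norm_def l2_inner_self_nonneg)
  show "(\<lambda>n. sqrt (T n * l2_inner f f)) \<longlonglongrightarrow> 0"
    using tendsto_real_sqrt[OF tendsto_mult_left_zero[OF diamond_eigval_tail_tendsto[OF a(1)]]]
    unfolding T_def by simp
qed

theorem mainTheorem3:
  fixes \<alpha> :: real
  assumes "0 < \<alpha>" and "\<alpha> \<le> 1 / sqrt 2"
  shows
    \<comment> \<open>the g_k are orthonormal elements of L2([-1,1])\<close>
    "(\<forall>k\<ge>1. L2 (gk \<alpha> k)) \<and>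
     (\<forall>j\<ge>1. \<forall>k\<ge>1. l2_inner (gk \<alpha> j) (gk \<alpha> k) = (if j = k then 1 else 0)) \<and>
    \<comment> \<open>the g_k lie in the range of T_X\<close>
     (\<forall>k\<ge>1. \<exists>f. L2 f \<and> (AE s in I11. TX \<alpha> f s = gk \<alpha> k s)) \<and>
    \<comment> \<open>T_X maps L2 into L2, and every element of the range is the L2-sum of its expansion in the g_k\<close>
     (\<forall>f. L2 f \<longrightarrow> L2 (TX \<alpha> f) \<and>
        (\<lambda>n. l2_norm (\<lambda>s. TX \<alpha> f s - (\<Sum>k=1..n. l2_inner (gk \<alpha> k) (TX \<alpha> f) * gk \<alpha> k s)))
          \<longlonglongrightarrow> 0) \<and>
    \<comment> \<open>T_X = sum_k lam_k g_k g_k^*, convergence in operator norm\<close>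
     (\<forall>\<epsilon>>0. \<exists>N. \<forall>n\<ge>N. \<forall>f. L2 f \<longrightarrow>
        l2_norm (\<lambda>s. TX \<alpha> f s - (\<Sum>k=1..n. lam \<alpha> k * l2_inner (gk \<alpha> k) f * gk \<alpha> k s))
          \<le> \<epsilon> * l2_norm f)"
proof -
  define a where "a = sqrt 2 * \<alpha>"
  have a: "0 < a" "a \<le> 1"
    using assms mult_left_mono[OF assms(2), of "sqrt 2"] by (auto simp: a_def)
  have "\<exists>f. L2 f \<and> (AE s in I11. diamond_op a f s = diamond_eigfun a k s)" if k: "1 \<le> k" for k
  proof -
    obtain f where "L2 f" "diamond_op a f = diamond_eigfun a k"
      using diamond_eigfun_in_range[OF a k] by blast
    then show ?thesis by auto
  qed
  then show ?thesis
    unfolding gk_eq_diamond_eigfun[OF assms(1)] lam_eq_diamond_eigval[OF assms(1)] TX_eq_diamond_op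
      a_def[symmetric]
    using diamond_eigfun_orthonormal[OF a] L2_diamond_op[OF a]
      diamond_op_expansion_tendsto[OF a] diamond_op_partial_sums_uniform[OF a]
    by (auto simp: l2_orthonormal_def)
qed

end
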